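(* Let $\alpha,\beta,\gamma\in\Bbbk^n$ and $\mathcal H=\mathcal H(\alpha,\beta,\gamma)$. A $\Bbbk$-basis of $\mathcal H$ is given by the (images of the) paths \[(u_iu_{i+1}\cdots u_{i+k-1})\,(d_{i+k-1}u_{i+k-1})^j\,(d_{i+k-1}d_{i+k-2}\cdots d_{i+k-\ell}),\qquad i\in Q_0,\ j,k,\ell\ge 0,\] where the block of $u$'s is empty if $k=0$, the block of $d$'s is empty if $\ell=0$, and for $j=k=\ell=0$ the path is the trivial path $e_i$ (indices mod $n$; in particular $k,\ell$ may exceed $n$, so arrows repeat).
   Context: $\Bbbk$ is an algebraically closed field of characteristic zero. Fix $n\ge1$; indices are taken modulo $n$ and $Q_0=\{0,\dots,n-1\}$. Let $Q$ be the quiver with vertex set $Q_0$ and arrows $u_i:i\to i+1$ and $d_i:i+1\to i$ for each $i\in Q_0$ (for $n=1$ these are two loops). Paths are written left to right: in a path $a_1a_2\cdots a_m$ the target of $a_j$ is the source of $a_{j+1}$; multiplication in the path algebra $\Bbbk Q$ is concatenation (zero if the paths do not compose), and $e_i$ is the trivial path at $i$, so $e_iu_i=u_i=u_ie_{i+1}$ and $e_{i+1}d_i=d_i=d_ie_i$. For $\alpha,\beta,\gamma\in\Bbbk^n$ the quiver down-up algebra $\mathcal H(\alpha,\beta,\gamma)$ is $\Bbbk Q$ modulo the relations $d_{i-1}u_{i-1}u_i=\alpha_iu_id_iu_i+\beta_iu_iu_{i+1}d_{i+1}+\gamma_iu_i$ and $d_id_{i-1}u_{i-1}=\alpha_id_iu_id_i+\beta_iu_{i+1}d_{i+1}d_i+\gamma_id_i$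 for all $i\in Q_0$. *)

theory Defs
  imports Main "HOL-Computational_Algebra.Polynomial"
begin

text \<open>Arrows of the cyclic double quiver with vertices 0..n-1:
  U i is u_i : i -> i+1, D i is d_i : i+1 -> i (indices mod n).\<close>
datatype arr = U nat | D nat

definition idx :: "nat \<Rightarrow> int \<Rightarrow> nat" where
  "idx n z = nat (z mod int n)"

fun arr_src :: "nat \<Rightarrow> arr \<Rightarrow> nat" where
  "arr_src n (U i) = i"
| "arr_src n (D i) = (i + 1) mod n"

fun arr_tgt :: "nat \<Rightarrow> arr \<Rightarrow> nat" where
  "arr_tgt n (U i) = (i + 1) mod n"
| "arr_tgt n (D i) = i"

fun arr_idx :: "arr \<Rightarrow> nat" where
  "arr_idx (U i) = i"
| "arr_idx (D i) = i"

text \<open>A path is a pair (v, as): start vertex v and arrows a_1...a_m written left to right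
  (target of a_j = source of a_(j+1)); (v, []) is the trivial path e_v.\<close>
type_synonym path = "nat \<times> arr list"

fun valid_arrs :: "nat \<Rightarrow> nat \<Rightarrow> arr list \<Rightarrow> bool" where
  "valid_arrs n v [] = (v < n)"
| "valid_arrs n v (a # as) =
     (v < n \<and> arr_idx a < n \<and> arr_src n a = v \<and> valid_arrs n (arr_tgt n a) as)"

definition valid_path :: "nat \<Rightarrow> path \<Rightarrow> bool" where
  "valid_path n p = valid_arrs n (fst p) (snd p)"

fun end_vertex :: "nat \<Rightarrow> nat \<Rightarrow> arr list \<Rightarrow> nat" where
  "end_vertex n v [] = v"
| "end_vertex n v (a # as) = end_vertex n (arr_tgt n a) as"

definition path_tgt :: "nat \<Rightarrow> path \<Rightarrow> nat" where
  "path_tgt n p = end_vertex n (fst p) (snd p)"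

text \<open>Elements of the path algebra kQ are represented as finitely supported functions
  path => k (coefficient of each path); basis vector of a path:\<close>
definition pvec :: "path \<Rightarrow> path \<Rightarrow> 'k::field" where
  "pvec p = (\<lambda>x. if x = p then 1 else 0)"

text \<open>Relations of H(alpha,beta,gamma) at vertex i, as (start vertex, end vertex,
  list of (coefficient, arrow word)).\<close>
definition relU :: "nat \<Rightarrow> (nat \<Rightarrow> 'k::field) \<Rightarrow> (nat \<Rightarrow> 'k) \<Rightarrow> (nat \<Rightarrow> 'k) \<Rightarrow> nat
    \<Rightarrow> nat \<times> nat \<times> ('k \<times> arr list) list" where
  "relU n \<alpha> \<beta> \<gamma> i =
    (let im = idx n (int i - 1); ip = idx n (int i + 1) in
     (i, ip,
      [(1, [D im, U im, U i]),
       (- \<alpha> i, [U i, D i, U i]),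
       (- \<beta> i, [U i, U ip, D ip]),
       (- \<gamma> i, [U i])]))"

definition relD :: "nat \<Rightarrow> (nat \<Rightarrow> 'k::field) \<Rightarrow> (nat \<Rightarrow> 'k) \<Rightarrow> (nat \<Rightarrow> 'k) \<Rightarrow> nat
    \<Rightarrow> nat \<times> nat \<times> ('k \<times> arr list) list" where
  "relD n \<alpha> \<beta> \<gamma> i =
    (let im = idx n (int i - 1); ip = idx n (int i + 1) in
     (ip, i,
      [(1, [D i, D im, U im]),
       (- \<alpha> i, [D i, U i, D i]),
       (- \<beta> i, [U ip, D ip, D i]),
       (- \<gamma> i, [D i])]))"

text \<open>The element p * r * q of kQ, for paths p = (a, ps), q (arrow list qs) and a relation
  r given by its list of terms, assuming the product is composable.\<close>
definition sandwich :: "path \<Rightarrow> ('k::field \<times> arr list) list \<Rightarrow> arr list \<Rightarrow> path \<Rightarrow> 'k" where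
  "sandwich p ts qs = (\<lambda>x. sum_list (map (\<lambda>(c, as). if x = (fst p, snd p @ as @ qs) then c else 0) ts))"

text \<open>The two-sided ideal of kQ generated by the relations: the k-span of all
  (nonzero, i.e. composable) products p * r * q with p, q paths and r a relation.\<close>
inductive_set hideal :: "nat \<Rightarrow> (nat \<Rightarrow> 'k::field) \<Rightarrow> (nat \<Rightarrow> 'k) \<Rightarrow> (nat \<Rightarrow> 'k)
    \<Rightarrow> (path \<Rightarrow> 'k) set"
  for n \<alpha> \<beta> \<gamma> where
  zero: "(\<lambda>_. 0) \<in> hideal n \<alpha> \<beta> \<gamma>"
| add: "f \<in> hideal n \<alpha> \<beta> \<gamma> \<Longrightarrow> g \<in> hideal n \<alpha> \<beta> \<gamma> \<Longrightarrow> (\<lambda>x. f x + g x) \<in> hideal n \<alpha> \<beta> \<gamma>"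
| smult: "f \<in> hideal n \<alpha> \<beta> \<gamma> \<Longrightarrow> (\<lambda>x. c * f x) \<in> hideal n \<alpha> \<beta> \<gamma>"
| gen: "\<lbrakk> i < n; r = relU n \<alpha> \<beta> \<gamma> i \<or> r = relD n \<alpha> \<beta> \<gamma> i;
          valid_path n p; path_tgt n p = fst r;
          valid_arrs n (fst (snd r)) qs \<rbrakk>
        \<Longrightarrow> sandwich p (snd (snd r)) qs \<in> hideal n \<alpha> \<beta> \<gamma>"

definition bpath :: "nat \<Rightarrow> nat \<Rightarrow> nat \<Rightarrow> nat \<Rightarrow> nat \<Rightarrow> path" where
  "bpath n i j k l =
    (i, map (\<lambda>m. U (idx n (int i + int m))) [0..<k]
        @ concat (replicate j [D (idx n (int i + int k - 1)), U (idx n (int i + int k - 1))])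
        @ map (\<lambda>m. D (idx n (int i + int k - 1 - int m))) [0..<l])"

end

theory Submission
  imports Defs "HOL-Library.Groups_Big_Fun"
begin

(* Bergman's diamond lemma. Each relation is read as a rewriting rule replacing its leading word
   d_(i-1) u_(i-1) u_i, resp. d_i d_(i-1) u_(i-1), by the remaining terms. A rewriting step shortens
   a word or removes an occurrence of a d before a u, so rewriting terminates. The only overlap of
   two leading words is d_i d_(i-1) u_(i-1) u_i, and its two reductions have a common reduct.
   Hence the normal form map nf does not depend on the choice of redexes; its linear extension
   vanishes on the ideal, and p - nf p lies in the ideal for every path p. The irreducible paths
   are exactly the paths (u...u) (du)^j (d...d) of the statement, so these form a basis. *)

section \<open>Paths and the basis paths\<close>

lemma valid_arrs_less: "valid_arrs n v w \<Longrightarrow> v < n"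
  by (cases w) auto

lemma valid_arrs_append:
  "valid_arrs n v (xs @ ys) \<longleftrightarrow> valid_arrs n v xs \<and> valid_arrs n (end_vertex n v xs) ys"
  by (induction xs arbitrary: v) (auto dest: valid_arrs_less)

fun is_D :: "arr \<Rightarrow> bool" where
  "is_D (D _) = True"
| "is_D (U _) = False"

lemma fst_bpath [simp]: "fst (bpath n i j k l) = i"
  by (simp add: bpath_def)

lemma bpath_counts:
  "length (filter (\<lambda>a. \<not> is_D a) (snd (bpath n i j k l))) = k + j"
  "length (filter is_D (snd (bpath n i j k l))) = j + l"
  "length (takeWhile (\<lambda>a. \<not> is_D a) (snd (bpath n i j k l))) = k"
proof -
  let ?t = "idx n (int i + int k - 1)"
  show "length (filter (\<lambda>a. \<not> is_D a) (snd (bpath n i j k l))) = k + j"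
    "length (filter is_D (snd (bpath n i j k l))) = j + l"
    by (induction j) (auto simp: bpath_def)
  let ?rest = "concat (replicate j [D ?t, U ?t]) @ map (\<lambda>m. D (idx n (int i + int k - 1 - int m))) [0..<l]"
  have "takeWhile (\<lambda>a. \<not> is_D a) ?rest = []"
    by (cases j; cases l) (auto simp: upt_conv_Cons simp del: upt_Suc)
  moreover have "takeWhile (\<lambda>a. \<not> is_D a) (map (\<lambda>m. U (idx n (int i + int m))) [0..<k] @ ?rest)
      = map (\<lambda>m. U (idx n (int i + int m))) [0..<k] @ takeWhile (\<lambda>a. \<not> is_D a) ?rest"
    by (rule takeWhile_append2) auto
  ultimately show "length (takeWhile (\<lambda>a. \<not> is_D a) (snd (bpath n i j k l))) = k"
    by (simp add: bpath_def)
qed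

definition basis_path :: "nat \<Rightarrow> nat \<times> nat \<times> nat \<times> nat \<Rightarrow> path" where
  "basis_path n t = (case t of (i, j, k, l) \<Rightarrow> bpath n i j k l)"

lemma inj_basis_path: "inj (basis_path n)"
proof (rule injI)
  fix t t' assume eq: "basis_path n t = basis_path n t'"
  obtain i j k l i' j' k' l' where t: "t = (i, j, k, l)" "t' = (i', j', k', l')"
    by (cases t; cases t')
  have "bpath n i j k l = bpath n i' j' k' l'"
    using eq by (simp add: t basis_path_def)
  then have "i = i'" "k = k'" "k + j = k' + j'" "j + l = j' + l'"
    by (metis fst_bpath, metis bpath_counts(3), metis bpath_counts(1), metis bpath_counts(2))
  then show "t = t'"
    by (simp add: t)
qed

section \<open>Finitely supported functions on paths\<close>

lemma sandwich_Nil: "sandwich p [] qs = (\<lambda>x. 0)"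
  by (simp add: sandwich_def)

lemma sandwich_Cons:
  "sandwich p ((c, as) # ts) qs = (\<lambda>x. (if x = (fst p, snd p @ as @ qs) then c else 0) + sandwich p ts qs x)"
  by (simp add: sandwich_def)

lemma finite_support_sandwich: "finite {x. sandwich p ts qs x \<noteq> 0}"
proof (induction ts)
  case (Cons t ts)
  obtain c as where t: "t = (c, as)" by (cases t)
  have "{x. sandwich p (t # ts) qs x \<noteq> 0} \<subseteq> insert (fst p, snd p @ as @ qs) {x. sandwich p ts qs x \<noteq> 0}"
    by (auto simp: t sandwich_Cons)
  then show ?case using Cons.IH by (metis finite_insert finite_subset)
qed (simp add: sandwich_Nil)

lemma Sum_any_sandwich:
  "Sum_any (\<lambda>x. sandwich p ts qs x * h x) = (\<Sum>(c, as)\<leftarrow>ts. c * h (fst p, snd p @ as @ qs))"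
proof (induction ts)
  case (Cons t ts)
  obtain c as where t: "t = (c, as)" by (cases t)
  have "Sum_any (\<lambda>x. sandwich p (t # ts) qs x * h x)
      = Sum_any (\<lambda>x. (if x = (fst p, snd p @ as @ qs) then c * h x else 0) + sandwich p ts qs x * h x)"
    by (rule Sum_any.cong) (simp add: t sandwich_Cons distrib_right)
  also have "\<dots> = c * h (fst p, snd p @ as @ qs) + Sum_any (\<lambda>x. sandwich p ts qs x * h x)"
    by (subst Sum_any.distrib)
      (auto intro: finite_subset[OF _ finite_support_sandwich[of p ts qs]])
  finally show ?case by (simp add: Cons.IH t)
qed (simp add: sandwich_Nil)

lemma finite_support_hideal: "f \<in> hideal n \<alpha> \<beta> \<gamma> \<Longrightarrow> finite {x. f x \<noteq> 0}"
proof (induction rule: hideal.induct)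
  case (add f g)
  then show ?case by (auto intro: finite_subset[of _ "{x. f x \<noteq> 0} \<union> {x. g x \<noteq> 0}"])
next
  case (smult f c)
  then show ?case by (auto intro: finite_subset[of _ "{x. f x \<noteq> 0}"])
qed (simp_all add: finite_support_sandwich)

lemma sum_pvec_mult: "finite S \<Longrightarrow> q \<in> S \<Longrightarrow> (\<Sum>z\<in>S. pvec q z * h z) = h q"
proof -
  assume "finite S" "q \<in> S"
  have "(\<Sum>z\<in>S. pvec q z * h z) = (\<Sum>z\<in>S. if z = q then h z else 0)"
    by (rule sum.cong) (simp_all add: pvec_def)
  with \<open>finite S\<close> \<open>q \<in> S\<close> show ?thesis by simp
qed

lemma sum_pvec_expansion:
  assumes fin: "finite {z. f z \<noteq> 0}" and range: "{z. f z \<noteq> 0} \<subseteq> range b" and "inj b"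
  shows "(\<Sum>t\<in>b -` {z. f z \<noteq> 0}. f (b t) * pvec (b t) x) = f x"
proof -
  have "b ` (b -` {z. f z \<noteq> 0}) = {z. f z \<noteq> 0}"
    using range by blast
  then have "(\<Sum>t\<in>b -` {z. f z \<noteq> 0}. f (b t) * pvec (b t) x) = (\<Sum>z\<in>{z. f z \<noteq> 0}. f z * pvec z x)"
    using sum.reindex[of b "b -` {z. f z \<noteq> 0}" "\<lambda>z. f z * pvec z x"] \<open>inj b\<close>
    by (simp add: inj_on_subset)
  also have "\<dots> = f x"
    using fin by (simp add: pvec_def if_distrib cong: if_cong)
  finally show ?thesis .
qed

section \<open>The rewriting system\<close>

fun inversions :: "arr list \<Rightarrow> nat" where
  "inversions [] = 0"
| "inversions (a # w) = (if is_D a then length (filter (\<lambda>a. \<not> is_D a) w) else 0) + inversions w"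

lemma inversions_append:
  "inversions (xs @ ys) =
     inversions xs + inversions ys + length (filter is_D xs) * length (filter (\<lambda>a. \<not> is_D a) ys)"
  by (induction xs) (auto simp: algebra_simps)

definition word_order :: "(arr list \<times> arr list) set" where
  "word_order = measures [length, inversions]"

lemma wf_word_order: "wf word_order"
  by (simp add: word_order_def)

(* RelU i and RelD i are the two relations at vertex i, read as rewriting rules
   lead_word = \<alpha> i * alpha_word + \<beta> i * beta_word + \<gamma> i * gamma_word. *)
datatype rel_index = RelU nat | RelD nat

fun rel_vertex :: "rel_index \<Rightarrow> nat" where
  "rel_vertex (RelU i) = i"
| "rel_vertex (RelD i) = i"

locale cyclic_quiver =
  fixes n :: nat
  assumes n_pos: "0 < n"
begin

definition vsucc :: "nat \<Rightarrow> nat" where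
  "vsucc i = idx n (int i + 1)"

definition vpred :: "nat \<Rightarrow> nat" where
  "vpred i = idx n (int i - 1)"

lemma idx_less [simp]: "idx n z < n"
  using n_pos by (simp add: idx_def nat_less_iff)

lemma of_nat_idx: "int (idx n z) = z mod int n"
  using n_pos by (simp add: idx_def)

lemma idx_eqI: "a mod int n = b mod int n \<Longrightarrow> idx n a = idx n b"
  by (simp add: idx_def)

lemma idx_of_nat [simp]: "i < n \<Longrightarrow> idx n (int i) = i"
  by (simp add: idx_def zmod_int[symmetric])

lemma idx_idx_add: "idx n (int (idx n a) + b) = idx n (a + b)"
  by (rule idx_eqI) (simp add: of_nat_idx mod_add_left_eq)

lemma vsucc_less [simp]: "vsucc i < n" and vpred_less [simp]: "vpred i < n"
  by (simp_all add: vsucc_def vpred_def)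

lemma vpred_vsucc [simp]: "i < n \<Longrightarrow> vpred (vsucc i) = i"
  using idx_idx_add[of "int i + 1" "-1"] by (simp add: vpred_def vsucc_def)

lemma vsucc_vpred [simp]: "i < n \<Longrightarrow> vsucc (vpred i) = i"
  using idx_idx_add[of "int i - 1" 1] by (simp add: vpred_def vsucc_def)

lemma Suc_mod_eq_vsucc [simp]: "Suc i mod n = vsucc i"
proof -
  have "nat ((int i + 1) mod int n) = Suc i mod n"
    by (metis nat_int of_nat_Suc zmod_int add.commute)
  then show ?thesis by (simp add: vsucc_def idx_def)
qed

fun lead_word :: "rel_index \<Rightarrow> arr list" where
  "lead_word (RelU i) = [D (vpred i), U (vpred i), U i]"
| "lead_word (RelD i) = [D i, D (vpred i), U (vpred i)]"

fun alpha_word :: "rel_index \<Rightarrow> arr list" where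
  "alpha_word (RelU i) = [U i, D i, U i]"
| "alpha_word (RelD i) = [D i, U i, D i]"

fun beta_word :: "rel_index \<Rightarrow> arr list" where
  "beta_word (RelU i) = [U i, U (vsucc i), D (vsucc i)]"
| "beta_word (RelD i) = [U (vsucc i), D (vsucc i), D i]"

fun gamma_word :: "rel_index \<Rightarrow> arr list" where
  "gamma_word (RelU i) = [U i]"
| "gamma_word (RelD i) = [D i]"

fun rel_start :: "rel_index \<Rightarrow> nat" where
  "rel_start (RelU i) = i"
| "rel_start (RelD i) = vsucc i"

fun rel_end :: "rel_index \<Rightarrow> nat" where
  "rel_end (RelU i) = vsucc i"
| "rel_end (RelD i) = i"

lemma length_lead_word [simp]: "length (lead_word r) = 3"
  by (cases r) simp_all

(* A leading word has two inversions, its alpha- and beta-reducts have one and none,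
   and its gamma-reduct is shorter. *)
lemma reducts_smaller:
  "(x @ alpha_word r @ y, x @ lead_word r @ y) \<in> word_order"
  "(x @ beta_word r @ y, x @ lead_word r @ y) \<in> word_order"
  "(x @ gamma_word r @ y, x @ lead_word r @ y) \<in> word_order"
  by (cases r; simp add: word_order_def inversions_append)+

lemma valid_arrs_lead_word:
  "rel_vertex r < n \<Longrightarrow>
     valid_arrs n v (lead_word r @ y) \<longleftrightarrow> v = rel_start r \<and> valid_arrs n (rel_end r) y"
  by (cases r) auto

lemma valid_arrs_reducts:
  assumes "valid_arrs n v (x @ lead_word r @ y)" and "rel_vertex r < n"
  shows "valid_arrs n v (x @ alpha_word r @ y)" "valid_arrs n v (x @ beta_word r @ y)"
    "valid_arrs n v (x @ gamma_word r @ y)"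
  using assms by (cases r; auto simp: valid_arrs_append valid_arrs_lead_word)+

definition has_redex :: "arr list \<Rightarrow> bool" where
  "has_redex w \<longleftrightarrow> (\<exists>x r y. rel_vertex r < n \<and> w = x @ lead_word r @ y)"

definition redex :: "arr list \<Rightarrow> arr list \<times> rel_index \<times> arr list" where
  "redex w = (SOME (x, r, y). rel_vertex r < n \<and> w = x @ lead_word r @ y)"

lemma redex_spec:
  assumes "has_redex w" and "redex w = (x, r, y)"
  shows "rel_vertex r < n" "w = x @ lead_word r @ y"
proof -
  have "\<exists>t. case t of (x, r, y) \<Rightarrow> rel_vertex r < n \<and> w = x @ lead_word r @ y"
    using assms(1) by (auto simp: has_redex_def)
  from someI_ex[OF this] show "rel_vertex r < n" "w = x @ lead_word r @ y"
    using assms(2) by (simp_all add: redex_def)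
qed

lemma has_redexI: "rel_vertex r < n \<Longrightarrow> has_redex (x @ lead_word r @ y)"
  unfolding has_redex_def by blast

lemma lead_word_inj: "rel_vertex r < n \<Longrightarrow> rel_vertex r' < n \<Longrightarrow> lead_word r = lead_word r' \<Longrightarrow> r = r'"
  by (cases r; cases r') (auto dest: arg_cong[of _ _ vsucc])

lemma two_redexes_cases:
  assumes w: "x @ lead_word r @ y = x' @ lead_word r' @ y'"
    and r: "rel_vertex r < n" "rel_vertex r' < n" and le: "length x' \<le> length x"
  obtains "x' = x" "r' = r" "y' = y"
  | X where "r' = RelD X" "r = RelU X" "x = x' @ [D X]" "y' = U X # y"
  | s where "x = x' @ lead_word r' @ s" "y' = s @ lead_word r @ y"
proof -
  obtain us where us: "x = x' @ us" "lead_word r' @ y' = us @ lead_word r @ y"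
    using w le by (metis append_eq_append_conv_if append_eq_conv_conj)
  consider "us = []" | a where "us = [a]" | a b where "us = [a, b]"
    | a b c s where "us = a # b # c # s"
    by (metis list.exhaust)
  then show ?thesis
  proof cases
    case 1
    then show ?thesis using us r lead_word_inj that(1) by simp
  next
    case 2
    then show ?thesis using us r that(2) by (cases r; cases r') (auto dest: arg_cong[of _ _ vsucc])
  next
    case 3
    then show ?thesis using us by (cases r; cases r') auto
  next
    case 4
    then have "lead_word r' = [a, b, c]" "y' = s @ lead_word r @ y"
      using us(2) by (cases r'; simp)+
    then show ?thesis using us 4 that(3) by simp
  qed
qed

lemma redex_induct [case_names irreducible reducible]:
  assumes "\<And>w. \<not> has_redex w \<Longrightarrow> P w"
    and "\<And>x r y. rel_vertex r < n \<Longrightarrow> P (x @ alpha_word r @ y) \<Longrightarrow> P (x @ beta_word r @ y)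
           \<Longrightarrow> P (x @ gamma_word r @ y) \<Longrightarrow> P (x @ lead_word r @ y)"
  shows "P w"
proof (induction w rule: wf_induct_rule[OF wf_word_order])
  case (1 w)
  show ?case
  proof (cases "has_redex w")
    case True
    then obtain x r y where "rel_vertex r < n" "w = x @ lead_word r @ y"
      by (auto simp: has_redex_def)
    then show ?thesis
      using assms(2) 1 reducts_smaller by blast
  qed (rule assms(1))
qed

lemma bpath_Suc_up:
  "v < n \<Longrightarrow> bpath n v j (Suc k) l = (v, U v # snd (bpath n (vsucc v) j k l))"
  by (simp only: bpath_def vsucc_def diff_conv_add_uminus add.assoc idx_idx_add)
    (simp add: map_upt_Suc ac_simps del: upt_Suc)

lemma D_Cons_bpath_one_up:
  "x < n \<Longrightarrow> D x # snd (bpath n x j 1 l) = snd (bpath n (vsucc x) (Suc j) 0 l)"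
  by (simp only: bpath_def vsucc_def diff_conv_add_uminus add.assoc idx_idx_add)
    (simp add: ac_simps)

lemma D_Cons_bpath_no_up:
  "x < n \<Longrightarrow> D x # snd (bpath n x 0 0 l) = snd (bpath n (vsucc x) 0 0 (Suc l))"
  by (simp only: bpath_def vsucc_def diff_conv_add_uminus add.assoc idx_idx_add)
    (simp add: map_upt_Suc algebra_simps del: upt_Suc)

lemma bpath_loop_prefix:
  "\<exists>w. snd (bpath n x (Suc j) 0 l) = D (vpred x) # U (vpred x) # w"
  by (simp add: bpath_def vpred_def)

lemma bpath_two_ups_prefix:
  "x < n \<Longrightarrow> \<exists>w. snd (bpath n x j (Suc (Suc k)) l) = U x # U (vsucc x) # w"
  by (simp add: bpath_def vsucc_def map_upt_Suc del: upt_Suc)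

lemma has_redex_Cons: "has_redex w \<Longrightarrow> has_redex (a # w)"
  unfolding has_redex_def by (metis append_Cons)

lemma D_Cons_bpath:
  assumes x: "x < n" and irr: "\<not> has_redex (D x # snd (bpath n x j k l))"
  shows "\<exists>j' k' l'. D x # snd (bpath n x j k l) = snd (bpath n (vsucc x) j' k' l')"
proof -
  consider "k = 0" "j = 0" | j' where "k = 0" "j = Suc j'" | "k = 1" | k' where "k = Suc (Suc k')"
    by (metis One_nat_def not0_implies_Suc)
  then show ?thesis
  proof cases
    case 1
    then show ?thesis using D_Cons_bpath_no_up[OF x] by blast
  next
    case (2 j')
    then obtain w where "D x # snd (bpath n x j k l) = [] @ lead_word (RelD x) @ w"
      using bpath_loop_prefix[of x j' l] by auto
    then show ?thesis using irr x by (metis has_redexI rel_vertex.simps(2))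
  next
    case 3
    then show ?thesis using D_Cons_bpath_one_up[OF x] by blast
  next
    case (4 k')
    then obtain w where "D x # snd (bpath n x j k l) = [] @ lead_word (RelU (vsucc x)) @ w"
      using bpath_two_ups_prefix[OF x, of j k' l] x by auto
    then show ?thesis using irr by (metis has_redexI rel_vertex.simps(1) vsucc_less)
  qed
qed

lemma irreducible_is_bpath:
  "valid_arrs n v w \<Longrightarrow> \<not> has_redex w \<Longrightarrow> \<exists>j k l. (v, w) = bpath n v j k l"
proof (induction w arbitrary: v)
  case Nil
  have "(v, []) = bpath n v 0 0 0" by (simp add: bpath_def)
  then show ?case by blast
next
  case (Cons a w)
  have a: "v < n" "arr_idx a < n" "arr_src n a = v" and w: "valid_arrs n (arr_tgt n a) w"
    using Cons.prems(1) by auto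
  obtain j k l where "(arr_tgt n a, w) = bpath n (arr_tgt n a) j k l"
    using Cons.IH[OF w] Cons.prems(2) has_redex_Cons by blast
  then have w_eq: "w = snd (bpath n (arr_tgt n a) j k l)"
    by (metis snd_conv)
  show ?case
  proof (cases a)
    case (U y)
    then have "(v, a # w) = bpath n v j (Suc k) l"
      using a w_eq bpath_Suc_up by simp
    then show ?thesis by blast
  next
    case (D x)
    then have x: "x < n" "vsucc x = v" and w_eq: "w = snd (bpath n x j k l)"
      using a w_eq by simp_all
    then obtain j' k' l' where "a # w = snd (bpath n v j' k' l')"
      using D_Cons_bpath[of x j k l] Cons.prems(2) D by auto
    then show ?thesis
      by (metis fst_bpath prod.collapse)
  qed
qed

fun lead_shape_free :: "arr list \<Rightarrow> bool" where
  "lead_shape_free (D _ # U _ # U _ # w) = False"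
| "lead_shape_free (D _ # D _ # U _ # w) = False"
| "lead_shape_free (_ # w) = lead_shape_free w"
| "lead_shape_free [] = True"

lemma lead_shape_free_Cons: "lead_shape_free (a # w) \<Longrightarrow> lead_shape_free w"
  by (cases "a # w" rule: lead_shape_free.cases) auto

lemma lead_shape_free_imp_irreducible: "lead_shape_free w \<Longrightarrow> \<not> has_redex w"
proof
  assume "lead_shape_free w" "has_redex w"
  then obtain x r y where "lead_shape_free (x @ lead_word r @ y)"
    by (auto simp: has_redex_def)
  then show False
    by (induction x) (cases r; auto dest: lead_shape_free_Cons)+
qed

lemma lead_shape_free_ups: "lead_shape_free (map (\<lambda>m. U (f m)) ms @ w) \<longleftrightarrow> lead_shape_free w"
  by (induction ms) auto

lemma lead_shape_free_loop_Cons: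
  "lead_shape_free w \<Longrightarrow> w = [] \<or> is_D (hd w) \<Longrightarrow> lead_shape_free (D p # U p # w)"
  by (cases w; cases "hd w") auto

lemma lead_shape_free_loops_downs:
  assumes "list_all is_D ds"
  shows "lead_shape_free (concat (replicate j [D p, U p]) @ ds)"
proof -
  let ?w = "concat (replicate j [D p, U p]) @ ds"
  have "lead_shape_free ?w \<and> (?w = [] \<or> is_D (hd ?w))"
  proof (induction j)
    case 0
    have "lead_shape_free ds" using assms by (induction ds rule: lead_shape_free.induct) auto
    then show ?case using assms by (cases ds) auto
  next
    case (Suc j)
    then show ?case by (simp add: lead_shape_free_loop_Cons)
  qed
  then show ?thesis ..
qed

lemma bpath_irreducible: "\<not> has_redex (snd (bpath n i j k l))"
  by (rule lead_shape_free_imp_irreducible)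
    (simp add: bpath_def lead_shape_free_ups lead_shape_free_loops_downs list_all_iff)

end

section \<open>The normal form map\<close>

locale down_up_algebra = cyclic_quiver n for n +
  fixes \<alpha> \<beta> \<gamma> :: "nat \<Rightarrow> 'k::field"
begin

(* Reduces an arbitrarily chosen redex; by nf_lead_word the choice does not matter. *)
function nf :: "path \<Rightarrow> path \<Rightarrow> 'k" where
  "nf (v, w) =
    (if has_redex w then
       (case redex w of (x, r, y) \<Rightarrow>
          (\<lambda>z. \<alpha> (rel_vertex r) * nf (v, x @ alpha_word r @ y) z
             + \<beta> (rel_vertex r) * nf (v, x @ beta_word r @ y) z
             + \<gamma> (rel_vertex r) * nf (v, x @ gamma_word r @ y) z))
     else pvec (v, w))"
  by pat_completeness auto
termination
proof (relation "inv_image word_order snd")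
  show "wf (inv_image word_order snd)" by (simp add: wf_word_order)
qed (auto simp: reducts_smaller dest!: redex_spec(2)[OF _ sym])

declare nf.simps [simp del]

definition nf_reduct :: "nat \<Rightarrow> arr list \<Rightarrow> rel_index \<Rightarrow> arr list \<Rightarrow> path \<Rightarrow> 'k" where
  "nf_reduct v x r y =
     (\<lambda>z. \<alpha> (rel_vertex r) * nf (v, x @ alpha_word r @ y) z
        + \<beta> (rel_vertex r) * nf (v, x @ beta_word r @ y) z
        + \<gamma> (rel_vertex r) * nf (v, x @ gamma_word r @ y) z)"

lemma nf_redex: "has_redex w \<Longrightarrow> redex w = (x, r, y) \<Longrightarrow> nf (v, w) = nf_reduct v x r y"
  by (simp add: nf.simps nf_reduct_def)

lemma nf_irreducible: "\<not> has_redex w \<Longrightarrow> nf (v, w) = pvec (v, w)"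
  by (simp add: nf.simps)

definition nf_resolves_below :: "nat \<Rightarrow> arr list \<Rightarrow> bool" where
  "nf_resolves_below v w \<longleftrightarrow>
     (\<forall>x r y. (x @ lead_word r @ y, w) \<in> word_order \<longrightarrow> rel_vertex r < n \<longrightarrow>
        nf (v, x @ lead_word r @ y) = nf_reduct v x r y)"

lemma nf_resolves_belowD:
  "nf_resolves_below v w \<Longrightarrow> (x @ lead_word r @ y, w) \<in> word_order \<Longrightarrow> rel_vertex r < n
    \<Longrightarrow> nf (v, x @ lead_word r @ y) = nf_reduct v x r y"
  unfolding nf_resolves_below_def by blast

lemma nf_reduct_disjoint:
  assumes IH: "nf_resolves_below v (x @ lead_word r @ s @ lead_word r' @ y)"
    and r: "rel_vertex r < n" "rel_vertex r' < n"
  shows "nf_reduct v x r (s @ lead_word r' @ y) = nf_reduct v (x @ lead_word r @ s) r' y"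
proof -
  have left: "nf (v, x @ u @ s @ lead_word r' @ y) = nf_reduct v (x @ u @ s) r' y"
    if "u \<in> {alpha_word r, beta_word r, gamma_word r}" for u
    using nf_resolves_belowD[OF IH, of "x @ u @ s" r' y] r(2) that
      reducts_smaller[of x r "s @ lead_word r' @ y"] by auto
  have right: "nf (v, x @ lead_word r @ s @ u @ y) = nf_reduct v x r (s @ u @ y)"
    if "u \<in> {alpha_word r', beta_word r', gamma_word r'}" for u
    using nf_resolves_belowD[OF IH, of x r "s @ u @ y"] r(1) that
      reducts_smaller[of "x @ lead_word r @ s" r' y] by auto
  show ?thesis
    by (simp add: left right fun_eq_iff nf_reduct_def algebra_simps)
qed

(* The only ambiguity. The two reductions differ only in their beta-terms, which are themselves
   leading words and reduce to the same element. *)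
lemma nf_reduct_overlap:
  assumes IH: "nf_resolves_below v (x @ [D X, D (vpred X), U (vpred X), U X] @ y)"
    and X: "X < n"
  shows "nf_reduct v x (RelD X) (U X # y) = nf_reduct v (x @ [D X]) (RelU X) y"
proof -
  have "nf (v, (x @ [U (vsucc X)]) @ lead_word (RelD (vsucc X)) @ y)
      = nf_reduct v (x @ [U (vsucc X)]) (RelD (vsucc X)) y"
    using nf_resolves_belowD[OF IH, of "x @ [U (vsucc X)]" "RelD (vsucc X)" y]
      reducts_smaller(2)[of x "RelD X" "U X # y"] X by simp
  moreover have "nf (v, x @ lead_word (RelU (vsucc X)) @ D (vsucc X) # y)
      = nf_reduct v x (RelU (vsucc X)) (D (vsucc X) # y)"
    using nf_resolves_belowD[OF IH, of x "RelU (vsucc X)" "D (vsucc X) # y"]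
      reducts_smaller(2)[of "x @ [D X]" "RelU X" y] X by simp
  ultimately show ?thesis
    using X by (simp add: nf_reduct_def fun_eq_iff algebra_simps)
qed

lemma nf_reducts_agree:
  assumes IH: "nf_resolves_below v (x @ lead_word r @ y)"
    and w: "x @ lead_word r @ y = x' @ lead_word r' @ y'"
    and r: "rel_vertex r < n" "rel_vertex r' < n" and le: "length x' \<le> length x"
  shows "nf_reduct v x r y = nf_reduct v x' r' y'"
  using w r le
proof (cases rule: two_redexes_cases)
  case (2 X)
  then show ?thesis
    using nf_reduct_overlap[of v x' X y] IH r by simp
next
  case (3 s)
  then show ?thesis
    using nf_reduct_disjoint[of v x' r' s r y] IH w r by simp
qed simp

theorem nf_lead_word:
  "rel_vertex r < n \<Longrightarrow> nf (v, x @ lead_word r @ y) = nf_reduct v x r y"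
proof (induction "x @ lead_word r @ y" arbitrary: x r y rule: wf_induct_rule[OF wf_word_order])
  case 1
  let ?w = "x @ lead_word r @ y"
  have IH: "nf_resolves_below v ?w"
    using 1 by (auto simp: nf_resolves_below_def)
  have hr: "has_redex ?w"
    using 1(2) by (rule has_redexI)
  obtain x' r' y' where red: "redex ?w = (x', r', y')"
    by (cases "redex ?w")
  note chosen = redex_spec[OF hr red]
  have "nf (v, ?w) = nf_reduct v x' r' y'"
    by (rule nf_redex[OF hr red])
  also have "\<dots> = nf_reduct v x r y"
  proof (cases "length x' \<le> length x")
    case True
    then show ?thesis
      using nf_reducts_agree[OF IH chosen(2) 1(2) chosen(1)] by simp
  next
    case False
    have "nf_resolves_below v (x' @ lead_word r' @ y')"
      using IH chosen(2) by simp
    from nf_reducts_agree[OF this chosen(2)[symmetric] chosen(1) 1(2)] False show ?thesis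
      by simp
  qed
  finally show ?case .
qed

section \<open>The ideal and the basis\<close>

definition rel_terms :: "rel_index \<Rightarrow> ('k \<times> arr list) list" where
  "rel_terms r =
     [(1, lead_word r), (- \<alpha> (rel_vertex r), alpha_word r),
      (- \<beta> (rel_vertex r), beta_word r), (- \<gamma> (rel_vertex r), gamma_word r)]"

lemma relU_eq: "relU n \<alpha> \<beta> \<gamma> i = (rel_start (RelU i), rel_end (RelU i), rel_terms (RelU i))"
  and relD_eq: "relD n \<alpha> \<beta> \<gamma> i = (rel_start (RelD i), rel_end (RelD i), rel_terms (RelD i))"
  by (simp_all add: relU_def relD_def rel_terms_def Let_def vpred_def vsucc_def)

lemma sandwich_rel_terms:
  "sandwich (v, x) (rel_terms r) y =
     (\<lambda>z. pvec (v, x @ lead_word r @ y) z - \<alpha> (rel_vertex r) * pvec (v, x @ alpha_word r @ y) z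
        - \<beta> (rel_vertex r) * pvec (v, x @ beta_word r @ y) z
        - \<gamma> (rel_vertex r) * pvec (v, x @ gamma_word r @ y) z)"
  by (simp add: sandwich_def rel_terms_def pvec_def fun_eq_iff)

lemma sandwich_rel_terms_in_hideal:
  assumes "valid_arrs n v (x @ lead_word r @ y)" and r: "rel_vertex r < n"
  shows "sandwich (v, x) (rel_terms r) y \<in> hideal n \<alpha> \<beta> \<gamma>"
proof -
  have "valid_arrs n v x" "end_vertex n v x = rel_start r" "valid_arrs n (rel_end r) y"
    using assms(1) valid_arrs_lead_word[OF r] by (simp_all add: valid_arrs_append[of n v x])
  then have "sandwich (v, x) (snd (snd (rel_start r, rel_end r, rel_terms r))) y \<in> hideal n \<alpha> \<beta> \<gamma>"
  proof (intro hideal.gen)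
    show "rel_vertex r < n" by (fact r)
    show "(rel_start r, rel_end r, rel_terms r) = relU n \<alpha> \<beta> \<gamma> (rel_vertex r)
        \<or> (rel_start r, rel_end r, rel_terms r) = relD n \<alpha> \<beta> \<gamma> (rel_vertex r)"
      by (cases r) (simp_all add: relU_eq relD_eq)
  qed (simp_all add: valid_path_def path_tgt_def)
  then show ?thesis by simp
qed

definition linear_nf :: "(path \<Rightarrow> 'k) \<Rightarrow> path \<Rightarrow> 'k" where
  "linear_nf f y = Sum_any (\<lambda>z. f z * nf z y)"

lemma linear_nf_hideal: "f \<in> hideal n \<alpha> \<beta> \<gamma> \<Longrightarrow> linear_nf f = (\<lambda>_. 0)"
proof (induction rule: hideal.induct)
  case (add f g)
  have "finite {z. f z * nf z y \<noteq> 0}" "finite {z. g z * nf z y \<noteq> 0}" for y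
    using add.hyps by (auto dest!: finite_support_hideal intro: finite_subset[rotated])
  then show ?case
    using add.IH by (simp add: linear_nf_def fun_eq_iff distrib_right Sum_any.distrib)
next
  case (smult f c)
  have "finite {z. f z * nf z y \<noteq> 0}" for y
    using smult.hyps by (auto dest!: finite_support_hideal intro: finite_subset[rotated])
  then show ?case
    using smult.IH by (simp add: linear_nf_def fun_eq_iff mult.assoc flip: Sum_any_right_distrib)
next
  case (gen i r p qs)
  obtain v x where p: "p = (v, x)" by (cases p)
  obtain r' where r': "rel_vertex r' = i" "snd (snd r) = rel_terms r'"
    using gen.hyps(2) by (metis relU_eq relD_eq rel_vertex.simps snd_conv)
  show ?case
    using nf_lead_word[of r' v x qs] gen.hyps(1) r'
    by (simp add: linear_nf_def p Sum_any_sandwich rel_terms_def nf_reduct_def fun_eq_iff)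
qed (simp add: linear_nf_def)

lemma pvec_minus_nf_in_hideal:
  "valid_arrs n v w \<Longrightarrow> (\<lambda>z. pvec (v, w) z - nf (v, w) z) \<in> hideal n \<alpha> \<beta> \<gamma>"
proof (induction w rule: redex_induct)
  case (irreducible w)
  then show ?case by (simp add: nf_irreducible hideal.zero)
next
  case (reducible x r y)
  let ?d = "\<lambda>u z. pvec (v, x @ u @ y) z - nf (v, x @ u @ y) z"
  let ?c = "rel_vertex r"
  have "(\<lambda>z. sandwich (v, x) (rel_terms r) y z + \<alpha> ?c * ?d (alpha_word r) z + \<beta> ?c * ?d (beta_word r) z
      + \<gamma> ?c * ?d (gamma_word r) z) \<in> hideal n \<alpha> \<beta> \<gamma>"
    using reducible valid_arrs_reducts[OF reducible.prems reducible.hyps]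
    by (intro hideal.add hideal.smult sandwich_rel_terms_in_hideal) simp_all
  then show ?case
    by (simp add: nf_lead_word reducible.hyps sandwich_rel_terms nf_reduct_def algebra_simps)
qed

lemma finite_support_nf: "finite {z. nf (v, w) z \<noteq> 0}"
proof (induction w rule: redex_induct)
  case (irreducible w)
  then show ?case by (simp add: nf_irreducible pvec_def)
next
  case (reducible x r y)
  then show ?case
    by (auto simp: nf_lead_word nf_reduct_def
        intro: finite_subset[of _ "{z. nf (v, x @ alpha_word r @ y) z \<noteq> 0}
                 \<union> {z. nf (v, x @ beta_word r @ y) z \<noteq> 0} \<union> {z. nf (v, x @ gamma_word r @ y) z \<noteq> 0}"])
qed

lemma support_nf_irreducible:
  "valid_arrs n v w \<Longrightarrow> nf (v, w) z \<noteq> 0 \<Longrightarrow> \<exists>w'. z = (v, w') \<and> valid_arrs n v w' \<and> \<not> has_redex w'"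
proof (induction w rule: redex_induct)
  case (irreducible w)
  then show ?case by (auto simp: nf_irreducible pvec_def split: if_splits)
next
  case (reducible x r y)
  then show ?case
    using valid_arrs_reducts[OF reducible.prems(1) reducible.hyps]
    by (fastforce simp: nf_lead_word nf_reduct_def)
qed

lemma nf_basis_path: "nf (basis_path n t) = pvec (basis_path n t)"
proof -
  have "nf (bpath n i j k l) = pvec (bpath n i j k l)" for i j k l
    using nf_irreducible[OF bpath_irreducible, of i i j k l] by (metis fst_bpath prod.collapse)
  then show ?thesis by (simp add: basis_path_def split: prod.split)
qed

lemma linear_nf_pvec_sum:
  assumes "finite T"
  shows "linear_nf (\<lambda>x. \<Sum>t\<in>T. c t * pvec (p t) x) y = (\<Sum>t\<in>T. c t * nf (p t) y)"
proof -
  have "linear_nf (\<lambda>x. \<Sum>t\<in>T. c t * pvec (p t) x) y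
      = (\<Sum>z\<in>p ` T. (\<Sum>t\<in>T. c t * pvec (p t) z) * nf z y)"
    unfolding linear_nf_def
  proof (rule Sum_any.expand_superset)
    show "{z. (\<Sum>t\<in>T. c t * pvec (p t) z) * nf z y \<noteq> 0} \<subseteq> p ` T"
    proof
      fix z assume "z \<in> {z. (\<Sum>t\<in>T. c t * pvec (p t) z) * nf z y \<noteq> 0}"
      then have "(\<Sum>t\<in>T. c t * pvec (p t) z) \<noteq> 0" by simp
      then obtain t where "t \<in> T" "c t * pvec (p t) z \<noteq> 0"
        by (meson sum.not_neutral_contains_not_neutral)
      then show "z \<in> p ` T" by (auto simp: pvec_def split: if_splits)
    qed
  qed (use assms in simp)
  also have "\<dots> = (\<Sum>t\<in>T. c t * (\<Sum>z\<in>p ` T. pvec (p t) z * nf z y))"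
    by (simp only: sum_distrib_right sum_distrib_left mult.assoc) (rule sum.swap)
  also have "\<dots> = (\<Sum>t\<in>T. c t * nf (p t) y)"
    using assms by (simp add: sum_pvec_mult)
  finally show ?thesis .
qed

lemma basis_paths_independent:
  assumes T: "finite T" and ideal: "(\<lambda>x. \<Sum>t\<in>T. c t * pvec (basis_path n t) x) \<in> hideal n \<alpha> \<beta> \<gamma>"
    and t: "t \<in> T"
  shows "c t = 0"
proof -
  let ?f = "\<lambda>x. \<Sum>t\<in>T. c t * pvec (basis_path n t) x"
  have "?f = linear_nf ?f"
    by (simp add: fun_eq_iff linear_nf_pvec_sum[OF T] nf_basis_path)
  also have "\<dots> = (\<lambda>_. 0)"
    using ideal by (rule linear_nf_hideal)
  finally have "?f (basis_path n t) = 0"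
    by (rule fun_cong)
  moreover have "?f (basis_path n t) = (\<Sum>s\<in>T. if s = t then c s else 0)"
    using inj_basis_path[of n] by (intro sum.cong) (auto simp: pvec_def inj_eq)
  ultimately show ?thesis
    using T t by simp
qed

lemma basis_paths_span:
  assumes "valid_path n p"
  shows "\<exists>T c. finite T \<and> (\<forall>(i, j, k, l) \<in> T. i < n) \<and>
           (\<lambda>x. pvec p x - (\<Sum>t\<in>T. c t * pvec (basis_path n t) x)) \<in> hideal n \<alpha> \<beta> \<gamma>"
proof -
  obtain v w where p: "p = (v, w)" and vw: "valid_arrs n v w"
    using assms by (cases p) (simp add: valid_path_def)
  let ?Z = "{z. nf p z \<noteq> 0}"
  have support: "?Z \<subseteq> basis_path n ` {t. fst t = v}"
  proof
    fix z assume "z \<in> ?Z"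
    then obtain w' where "z = (v, w')" "valid_arrs n v w'" "\<not> has_redex w'"
      using support_nf_irreducible[OF vw, of z] p by auto
    then obtain j k l where "z = basis_path n (v, j, k, l)"
      using irreducible_is_bpath by (fastforce simp: basis_path_def)
    then show "z \<in> basis_path n ` {t. fst t = v}" by force
  qed
  define T where "T = basis_path n -` ?Z"
  have expansion: "(\<Sum>t\<in>T. nf p (basis_path n t) * pvec (basis_path n t) x) = nf p x" for x
    unfolding T_def p
    by (rule sum_pvec_expansion) (use finite_support_nf support inj_basis_path in \<open>auto simp: p\<close>)
  have "finite T"
    unfolding T_def p using finite_support_nf inj_basis_path by (rule finite_vimageI)
  moreover have "\<forall>(i, j, k, l) \<in> T. i < n"
    using support valid_arrs_less[OF vw] inj_basis_path[of n] by (auto simp: T_def inj_eq)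
  moreover have "(\<lambda>x. pvec p x - (\<Sum>t\<in>T. nf p (basis_path n t) * pvec (basis_path n t) x))
      \<in> hideal n \<alpha> \<beta> \<gamma>"
    unfolding expansion using pvec_minus_nf_in_hideal[OF vw] by (simp add: p)
  ultimately show ?thesis by (intro exI[of _ T] exI[of _ "\<lambda>t. nf p (basis_path n t)"]) simp
qed

end

theorem proposition1p1:
  fixes n :: nat and \<alpha> \<beta> \<gamma> :: "nat \<Rightarrow> 'k::field_char_0"
  assumes alg_closed: "\<And>p :: 'k poly. degree p > 0 \<Longrightarrow> \<exists>x. poly p x = 0"
    and n: "n \<ge> 1"
  shows "(\<forall>T c. finite T \<and> (\<forall>(i, j, k, l) \<in> T. i < n) \<and>
            (\<lambda>x. \<Sum>t\<in>T. c t * pvec (case t of (i, j, k, l) \<Rightarrow> bpath n i j k l) x)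
              \<in> hideal n \<alpha> \<beta> \<gamma>
            \<longrightarrow> (\<forall>t\<in>T. c t = 0))
       \<and> (\<forall>p. valid_path n p \<longrightarrow>
            (\<exists>T c. finite T \<and> (\<forall>(i, j, k, l) \<in> T. i < n) \<and>
              (\<lambda>x. pvec p x - (\<Sum>t\<in>T. c t * pvec (case t of (i, j, k, l) \<Rightarrow> bpath n i j k l) x))
                \<in> hideal n \<alpha> \<beta> \<gamma>))"
proof -
  interpret down_up_algebra n \<alpha> \<beta> \<gamma>
    using n by unfold_locales simp
  have basis: "(\<lambda>t. case t of (i, j, k, l) \<Rightarrow> bpath n i j k l) = basis_path n"
    by (simp add: fun_eq_iff basis_path_def)
  show ?thesis
    unfolding basis using basis_paths_independent basis_paths_span by blast
qed

end
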